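(* Let $G=(V,E)$ be a finite simple graph that is both $P_6$-free and banner-free. If $G$ has an efficient dominating set, then the square $G^2$ is banner-free.
   Context: All graphs are finite, undirected and simple. $P_t$ denotes the path on $t$ vertices. For a family $\mathcal{F}$ of graphs, a graph $G$ is $\mathcal{F}$-free if it contains no induced subgraph isomorphic to a member of $\mathcal{F}$. A banner is the graph obtained from a chordless cycle on four vertices by adding one new vertex adjacent to exactly one vertex of the cycle. An efficient dominating set of $G$ is a subset $D\subseteq V$ that is an independent set such that every vertex of $V\setminus D$ has exactly one neighbor in $D$. For vertices $u,v$, $\mathrm{dist}_G(u,v)$ is the distance between them in $G$. The square of $G=(V,E)$ is the graph $G^2=(V,E^2)$ where $uv\in E^2$ if and only if $\mathrm{dist}_G(u,v)\in\{1,2\}$. *)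

theory Defs
  imports Main "HOL-Library.Extended_Nat"
begin

definition simple_graph :: "'a set \<Rightarrow> ('a \<Rightarrow> 'a \<Rightarrow> bool) \<Rightarrow> bool" where
  "simple_graph V E \<longleftrightarrow> finite V \<and> (\<forall>u v. E u v \<longrightarrow> u \<in> V \<and> v \<in> V)
     \<and> (\<forall>u v. E u v \<longrightarrow> E v u) \<and> (\<forall>v. \<not> E v v)"

definition has_induced :: "'a set \<Rightarrow> ('a \<Rightarrow> 'a \<Rightarrow> bool) \<Rightarrow> 'b set \<Rightarrow> ('b \<Rightarrow> 'b \<Rightarrow> bool) \<Rightarrow> bool" where
  "has_induced V E W F \<longleftrightarrow> (\<exists>f. inj_on f W \<and> f ` W \<subseteq> V \<and>
      (\<forall>x\<in>W. \<forall>y\<in>W. E (f x) (f y) \<longleftrightarrow> F x y))"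

definition path_edges :: "nat \<Rightarrow> nat \<Rightarrow> bool" where
  "path_edges i j \<longleftrightarrow> i + 1 = j \<or> j + 1 = i"

definition P_free :: "nat \<Rightarrow> 'a set \<Rightarrow> ('a \<Rightarrow> 'a \<Rightarrow> bool) \<Rightarrow> bool" where
  "P_free t V E \<longleftrightarrow> \<not> has_induced V E {0..<t} path_edges"

definition banner_edges :: "nat \<Rightarrow> nat \<Rightarrow> bool" where
  "banner_edges i j \<longleftrightarrow> {i, j} \<in> {{0,1}, {1,2}, {2,3}, {3,0}, {0,4}}"

definition banner_free :: "'a set \<Rightarrow> ('a \<Rightarrow> 'a \<Rightarrow> bool) \<Rightarrow> bool" where
  "banner_free V E \<longleftrightarrow> \<not> has_induced V E {0..<5} banner_edges"

definition efficient_dominating_set :: "'a set \<Rightarrow> ('a \<Rightarrow> 'a \<Rightarrow> bool) \<Rightarrow> 'a set \<Rightarrow> bool" where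
  "efficient_dominating_set V E D \<longleftrightarrow> D \<subseteq> V \<and> (\<forall>x\<in>D. \<forall>y\<in>D. \<not> E x y)
     \<and> (\<forall>v\<in>V - D. \<exists>!d. d \<in> D \<and> E v d)"

fun walk_len :: "'a set \<Rightarrow> ('a \<Rightarrow> 'a \<Rightarrow> bool) \<Rightarrow> 'a \<Rightarrow> 'a \<Rightarrow> nat \<Rightarrow> bool" where
  "walk_len V E u v 0 \<longleftrightarrow> u = v \<and> u \<in> V"
| "walk_len V E u v (Suc n) \<longleftrightarrow> (\<exists>w. E u w \<and> walk_len V E w v n)"

definition gdist :: "'a set \<Rightarrow> ('a \<Rightarrow> 'a \<Rightarrow> bool) \<Rightarrow> 'a \<Rightarrow> 'a \<Rightarrow> enat" where
  "gdist V E u v = (if \<exists>n. walk_len V E u v n then enat (LEAST n. walk_len V E u v n) else \<infinity>)"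

definition square_edges :: "'a set \<Rightarrow> ('a \<Rightarrow> 'a \<Rightarrow> bool) \<Rightarrow> 'a \<Rightarrow> 'a \<Rightarrow> bool" where
  "square_edges V E u v \<longleftrightarrow> u \<in> V \<and> v \<in> V \<and> gdist V E u v \<in> {1, 2}"

end

(* Let a b c d e induce a banner in the square, with 4-cycle a b c d and pendant e at a.
   In G the pairs a c and b d are at distance at least three, so every side of a b c d is
   an edge or has a midpoint, and no two consecutive sides are edges.  If some side is an
   edge, a short induced P6 or banner appears (through e when two opposite sides are edges).
   Otherwise the corners and midpoints x y z w form an octagon, and P6- and banner-freeness
   leave only two shapes for the midpoints: a 4-cycle x y z w, or the two crossing chords
   x z and y w.  Crossing chords again give a P6 or banner through e.  In the 4-cycle case
   no vertex of the octagon lies in the efficient dominating set D, and the private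
   D-neighbours of the four corners close induced P6s across and around the octagon, or
   hang as pendants on the 4-cycle x y z w. *)

theory Submission
  imports Defs
begin

definition within_two :: "('a \<Rightarrow> 'a \<Rightarrow> bool) \<Rightarrow> 'a \<Rightarrow> 'a \<Rightarrow> bool" where
  "within_two E u v \<longleftrightarrow> E u v \<or> (\<exists>w. E u w \<and> E w v)"

definition octagon ::
    "('a \<Rightarrow> 'a \<Rightarrow> bool) \<Rightarrow> 'a \<Rightarrow> 'a \<Rightarrow> 'a \<Rightarrow> 'a \<Rightarrow> 'a \<Rightarrow> 'a \<Rightarrow> 'a \<Rightarrow> 'a \<Rightarrow> bool" where
  "octagon E a x b y c z d w \<longleftrightarrow>
     E a x \<and> E x b \<and> E b y \<and> E y c \<and> E c z \<and> E z d \<and> E d w \<and> E w a \<and>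
     \<not> E a b \<and> \<not> E b c \<and> \<not> E c d \<and> \<not> E d a \<and>
     \<not> within_two E a c \<and> \<not> within_two E b d"

definition ring ::
    "('a \<Rightarrow> 'a \<Rightarrow> bool) \<Rightarrow> 'a \<Rightarrow> 'a \<Rightarrow> 'a \<Rightarrow> 'a \<Rightarrow> 'a \<Rightarrow> 'a \<Rightarrow> 'a \<Rightarrow> 'a \<Rightarrow> bool" where
  "ring E a x b y c z d w \<longleftrightarrow>
     octagon E a x b y c z d w \<and> E x y \<and> E y z \<and> E z w \<and> E w x"

lemma within_two_midpoint:
  assumes "within_two E u v" "\<not> E u v"
  obtains m where "E u m" "E m v"
  using assms unfolding within_two_def by blast

lemma far_no_common_neighbour:
  assumes "\<not> within_two E u v"
  shows "\<not> E u v" "E u w \<Longrightarrow> \<not> E w v" "E w v \<Longrightarrow> \<not> E u w"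
  using assms unfolding within_two_def by blast+

lemma has_induced_of_list:
  assumes "distinct vs" "set vs \<subseteq> V"
    and "\<forall>i\<in>{0..<length vs}. \<forall>j\<in>{0..<length vs}. E (vs ! i) (vs ! j) \<longleftrightarrow> F i j"
  shows "has_induced V E {0..<length vs} F"
  unfolding has_induced_def
proof (intro exI conjI)
  show "inj_on ((!) vs) {0..<length vs}"
    using assms(1) unfolding inj_on_def by (simp add: nth_eq_iff_index_eq)
  show "(!) vs ` {0..<length vs} \<subseteq> V"
    using assms(2) nth_mem by fastforce
  show "\<forall>i\<in>{0..<length vs}. \<forall>j\<in>{0..<length vs}. E (vs ! i) (vs ! j) \<longleftrightarrow> F i j"
    by (fact assms(3))
qed

lemma gdist_eq_enat_iff:
  "gdist V E u v = enat k \<longleftrightarrow> walk_len V E u v k \<and> (\<forall>j<k. \<not> walk_len V E u v j)"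
proof
  assume h: "gdist V E u v = enat k"
  then have ex: "\<exists>n. walk_len V E u v n"
    unfolding gdist_def by (auto split: if_splits)
  with h have "k = (LEAST n. walk_len V E u v n)"
    unfolding gdist_def by auto
  with ex show "walk_len V E u v k \<and> (\<forall>j<k. \<not> walk_len V E u v j)"
    by (metis LeastI not_less_Least)
next
  assume h: "walk_len V E u v k \<and> (\<forall>j<k. \<not> walk_len V E u v j)"
  then have "(LEAST n. walk_len V E u v n) = k"
    by (metis Least_equality not_le)
  with h show "gdist V E u v = enat k"
    unfolding gdist_def by auto
qed

lemma square_edges_iff:
  assumes "simple_graph V E"
  shows "square_edges V E u v \<longleftrightarrow> u \<in> V \<and> v \<in> V \<and> u \<noteq> v \<and> within_two E u v"
proof -
  have walk1: "walk_len V E u v 1 \<longleftrightarrow> E u v"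
    and walk2: "walk_len V E u v 2 \<longleftrightarrow> (\<exists>w. E u w \<and> E w v)"
    using assms by (auto simp: simple_graph_def numeral_2_eq_2)
  have "gdist V E u v \<in> {1, 2} \<longleftrightarrow> gdist V E u v = enat 1 \<or> gdist V E u v = enat 2"
    by (simp add: one_enat_def numeral_eq_enat)
  also have "\<dots> \<longleftrightarrow> \<not> (u = v \<and> u \<in> V) \<and> within_two E u v"
    unfolding gdist_eq_enat_iff within_two_def walk1 walk2
    using assms by (auto simp: less_Suc_eq numeral_2_eq_2 simple_graph_def)
  finally show ?thesis
    unfolding square_edges_def by auto
qed

locale p6_banner_free_graph =
  fixes V :: "'a set" and E :: "'a \<Rightarrow> 'a \<Rightarrow> bool"
  assumes simple: "simple_graph V E"
    and P6_free: "P_free 6 V E"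
    and banner_free: "banner_free V E"
begin

lemma adj_sym: "E u v \<longleftrightarrow> E v u"
  using simple unfolding simple_graph_def by blast

lemma adj_irrefl [simp]: "\<not> E v v"
  using simple unfolding simple_graph_def by blast

lemma adj_in_V: "E u v \<Longrightarrow> u \<in> V"
  using simple unfolding simple_graph_def by blast

lemma within_two_sym: "within_two E u v \<longleftrightarrow> within_two E v u"
  unfolding within_two_def by (metis adj_sym)

lemma no_induced_P6:
  assumes "E v0 v1" "E v1 v2" "E v2 v3" "E v3 v4" "E v4 v5"
    and "\<not> E v0 v2" "\<not> E v0 v3" "\<not> E v0 v4" "\<not> E v0 v5" "\<not> E v1 v3" "\<not> E v1 v4"
    "\<not> E v1 v5" "\<not> E v2 v4" "\<not> E v2 v5" "\<not> E v3 v5"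
  shows False
proof -
  let ?vs = "[v0, v1, v2, v3, v4, v5]"
  have "has_induced V E {0..<length ?vs} path_edges"
  proof (rule has_induced_of_list)
    show "distinct ?vs"
      using assms adj_sym by simp metis
    show "set ?vs \<subseteq> V"
      using assms(1-5) adj_in_V adj_sym by auto
    have "{0..<length ?vs} = {0, 1, 2, 3, 4, 5}" by auto
    then show "\<forall>i\<in>{0..<length ?vs}. \<forall>j\<in>{0..<length ?vs}. E (?vs ! i) (?vs ! j) \<longleftrightarrow> path_edges i j"
      using assms adj_sym by (auto simp: path_edges_def)
  qed
  then show False
    using P6_free unfolding P_free_def by (simp add: numeral_eq_Suc)
qed

lemma no_banner:
  assumes "E v0 v1" "E v1 v2" "E v2 v3" "E v3 v0" "E v0 v4" "v0 \<noteq> v2" "v1 \<noteq> v3"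
    and "\<not> E v0 v2" "\<not> E v1 v3" "\<not> E v1 v4" "\<not> E v2 v4" "\<not> E v3 v4"
  shows False
proof -
  let ?vs = "[v0, v1, v2, v3, v4]"
  have "has_induced V E {0..<length ?vs} banner_edges"
  proof (rule has_induced_of_list)
    show "distinct ?vs"
      using assms adj_sym by simp metis
    show "set ?vs \<subseteq> V"
      using assms(1-5) adj_in_V adj_sym by auto
    have "{0..<length ?vs} = {0, 1, 2, 3, 4}" by auto
    then show "\<forall>i\<in>{0..<length ?vs}. \<forall>j\<in>{0..<length ?vs}. E (?vs ! i) (?vs ! j) \<longleftrightarrow> banner_edges i j"
      using assms adj_sym by (auto simp: banner_edges_def doubleton_eq_iff)
  qed
  then show False
    using banner_free unfolding banner_free_def by (simp add: numeral_eq_Suc)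
qed

lemma no_far_quadrangle_single_edge_side:
  assumes ab: "E a b" and nbc: "\<not> E b c" and ncd: "\<not> E c d" and nda: "\<not> E d a"
    and bc: "within_two E b c" and da: "within_two E d a"
    and ac: "\<not> within_two E a c" and bd: "\<not> within_two E b d"
  shows False
proof -
  obtain y where y: "E b y" "E y c" using bc nbc by (rule within_two_midpoint)
  obtain w where w: "E d w" "E w a" using da nda by (rule within_two_midpoint)
  note far = far_no_common_neighbour[OF ac] far_no_common_neighbour[OF bd]
  have "\<not> E y w"
  proof
    assume "E y w"
    then show False
      using no_banner[of y b a w c] ab y w nbc far adj_sym by metis
  qed
  then show False
    using no_induced_P6[of c y b a w d] ab y w nbc ncd nda far adj_sym by metis
qed

lemma no_far_quadrangle_opposite_edge_sides:
  assumes ab: "E a b" and cd: "E c d" and nbc: "\<not> E b c" and nda: "\<not> E d a"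
    and bc: "within_two E b c" and ae: "within_two E a e"
    and ac: "\<not> within_two E a c" and bd: "\<not> within_two E b d"
    and eb: "\<not> within_two E e b" and ec: "\<not> within_two E e c" and ed: "\<not> within_two E e d"
  shows False
proof -
  obtain y where y: "E b y" "E y c" using bc nbc by (rule within_two_midpoint)
  note far = far_no_common_neighbour[OF ac] far_no_common_neighbour[OF bd]
    far_no_common_neighbour[OF eb] far_no_common_neighbour[OF ec] far_no_common_neighbour[OF ed]
  show False
  proof (cases "E a e")
    case True
    then show False
      using no_induced_P6[of e a b y c d] ab cd y nbc nda far adj_sym by metis
  next
    case False
    obtain m where m: "E a m" "E m e" using ae False by (rule within_two_midpoint)
    have "\<not> E m y"
    proof
      assume "E m y"
      then show False
        using no_banner[of m a b y e] ab m y False far adj_sym by metis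
    qed
    then show False
      using no_induced_P6[of e m a b y c] ab m y nbc False far adj_sym by metis
  qed
qed

lemma octagon_rotate:
  "octagon E a x b y c z d w \<Longrightarrow> octagon E b y c z d w a x"
  unfolding octagon_def using within_two_sym by blast

lemma octagon_reflect:
  "octagon E a x b y c z d w \<Longrightarrow> octagon E c y b x a w d z"
  unfolding octagon_def using adj_sym within_two_sym by blast

lemma octagon_non_edges:
  assumes "octagon E a x b y c z d w"
  shows "\<not> E a b" "\<not> E b c" "\<not> E c d" "\<not> E d a" "\<not> E a c" "\<not> E b d"
    "\<not> E a y" "\<not> E a z" "\<not> E x c" "\<not> E w c" "\<not> E b z" "\<not> E b w" "\<not> E x d" "\<not> E y d"
  using assms unfolding octagon_def within_two_def by (metis adj_sym)+

lemma octagon_edges: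
  assumes "octagon E a x b y c z d w"
  shows "E a x" "E x b" "E b y" "E y c" "E c z" "E z d" "E d w" "E w a"
  using assms unfolding octagon_def by blast+

lemma octagon_missing_short_chord:
  assumes oct: "octagon E a x b y c z d w" and nxy: "\<not> E x y"
  shows "E x z \<and> \<not> E y z"
proof -
  note oct_facts = octagon_edges[OF oct] octagon_non_edges[OF oct]
  have "E x z \<or> E y z"
    using no_induced_P6[of a x b y c z] nxy oct_facts adj_sym by metis
  moreover have "\<not> (E x z \<and> E y z)"
    using no_banner[of z x b y d] nxy oct_facts adj_sym by metis
  moreover have "\<not> (E y z \<and> \<not> E x z)"
    using no_induced_P6[of a x b y z d] nxy oct_facts adj_sym by metis
  ultimately show ?thesis by blast
qed

lemma octagon_crossing:
  assumes oct: "octagon E a x b y c z d w" and nxy: "\<not> E x y"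
  shows "E x z \<and> E y w \<and> \<not> E y z \<and> \<not> E z w \<and> \<not> E w x"
proof -
  have xz: "E x z \<and> \<not> E y z"
    using oct nxy by (rule octagon_missing_short_chord)
  moreover have yw: "E y w \<and> \<not> E x w"
    using octagon_missing_short_chord[OF octagon_reflect[OF oct]] nxy adj_sym by blast
  moreover have "\<not> E z w"
    using no_banner[of z x a w c] xz yw octagon_edges[OF oct] octagon_non_edges[OF oct] adj_sym
    by metis
  ultimately show ?thesis using adj_sym by blast
qed

lemma octagon_cases:
  assumes oct: "octagon E a x b y c z d w"
  shows "ring E a x b y c z d w \<or>
    (E x z \<and> E y w \<and> \<not> E x y \<and> \<not> E y z \<and> \<not> E z w \<and> \<not> E w x)"
proof -
  note rot = octagon_rotate[OF oct] octagon_rotate[OF octagon_rotate[OF oct]]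
    octagon_rotate[OF octagon_rotate[OF octagon_rotate[OF oct]]]
  have "\<not> E x y \<Longrightarrow> ?thesis" using octagon_crossing[OF oct] by blast
  moreover have "\<not> E y z \<Longrightarrow> ?thesis" using octagon_crossing[OF rot(1)] adj_sym by blast
  moreover have "\<not> E z w \<Longrightarrow> ?thesis" using octagon_crossing[OF rot(2)] adj_sym by blast
  moreover have "\<not> E w x \<Longrightarrow> ?thesis" using octagon_crossing[OF rot(3)] adj_sym by blast
  ultimately show ?thesis using oct unfolding ring_def by blast
qed

lemma no_crossed_octagon_with_far_pendant:
  assumes oct: "octagon E a x b y c z d w" and xz: "E x z" and nxy: "\<not> E x y" and nyz: "\<not> E y z"
    and ae: "within_two E a e"
    and eb: "\<not> within_two E e b" and ec: "\<not> within_two E e c" and ed: "\<not> within_two E e d"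
  shows False
proof -
  note oct_facts = octagon_edges[OF oct] octagon_non_edges[OF oct]
  note far = far_no_common_neighbour[OF eb] far_no_common_neighbour[OF ec]
    far_no_common_neighbour[OF ed]
  show False
  proof (cases "E a e")
    case True
    then show False
      using no_induced_P6[of e a x z c y] xz nxy nyz oct_facts far adj_sym by metis
  next
    case False
    obtain m where m: "E a m" "E m e" using ae False by (rule within_two_midpoint)
    have "E m x \<or> E m z"
      using no_induced_P6[of e m a x z c] m False xz oct_facts far adj_sym by metis
    moreover have "E m z \<Longrightarrow> E m x"
      using no_banner[of m a x z e] m False xz oct_facts far adj_sym by metis
    ultimately have mx: "E m x" by blast
    have "\<not> E m y"
      using no_banner[of m x b y e] m mx nxy oct_facts far adj_sym by metis
    then show False
      using no_induced_P6[of e m x b y c] m mx nxy oct_facts far adj_sym by metis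
  qed
qed

lemma ring_octagon: "ring E a x b y c z d w \<Longrightarrow> octagon E a x b y c z d w"
  unfolding ring_def by blast

lemma ring_inner_edges:
  "ring E a x b y c z d w \<Longrightarrow> E x y \<and> E y z \<and> E z w \<and> E w x"
  unfolding ring_def by blast

lemma ring_rotate: "ring E a x b y c z d w \<Longrightarrow> ring E b y c z d w a x"
  unfolding ring_def using octagon_rotate by blast

end

locale p6_banner_free_graph_with_ed = p6_banner_free_graph +
  fixes D :: "'a set"
  assumes efficient_dominating: "efficient_dominating_set V E D"
begin

lemma D_independent: "p \<in> D \<Longrightarrow> q \<in> D \<Longrightarrow> \<not> E p q"
  using efficient_dominating unfolding efficient_dominating_set_def by blast

lemma D_private_neighbour:
  assumes "p \<in> D" "q \<in> D" "E p v" "E q v"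
  shows "p = q"
proof -
  have "v \<in> V - D"
    using assms D_independent adj_in_V adj_sym by blast
  then have "\<exists>!r. r \<in> D \<and> E v r"
    using efficient_dominating unfolding efficient_dominating_set_def by blast
  then show ?thesis using assms adj_sym by blast
qed

lemma D_dominator:
  assumes "E v u" "v \<notin> D"
  obtains p where "p \<in> D" "E v p"
  using assms adj_in_V efficient_dominating unfolding efficient_dominating_set_def by blast

lemma ring_inner_not_in_D:
  assumes ring: "ring E a x b y c z d w"
  shows "x \<notin> D"
proof
  assume x: "x \<in> D"
  note oct_facts = octagon_edges[OF ring_octagon[OF ring]] octagon_non_edges[OF ring_octagon[OF ring]]
  have inner: "E x y" "E y z" "E z w" "E w x" using ring_inner_edges[OF ring] by blast+
  have c: "c \<notin> D" using D_private_neighbour[OF _ x, of c y] inner oct_facts adj_sym by metis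
  obtain \<gamma> where \<gamma>: "\<gamma> \<in> D" "E c \<gamma>" using oct_facts(5) c by (rule D_dominator)
  have d: "d \<notin> D" using D_private_neighbour[OF _ x, of d w] inner oct_facts adj_sym by metis
  obtain \<epsilon> where \<epsilon>: "\<epsilon> \<in> D" "E d \<epsilon>" using oct_facts(7) d by (rule D_dominator)
  have \<gamma>_non: "\<not> E \<gamma> x" "\<not> E \<gamma> y" "\<not> E \<gamma> w"
    using D_independent[OF \<gamma>(1) x] D_private_neighbour[OF \<gamma>(1) x] \<gamma> inner oct_facts adj_sym
    by metis+
  have \<epsilon>_non: "\<not> E \<epsilon> x" "\<not> E \<epsilon> y" "\<not> E \<epsilon> w"
    using D_independent[OF \<epsilon>(1) x] D_private_neighbour[OF \<epsilon>(1) x] \<epsilon> inner oct_facts adj_sym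
    by metis+
  have far: "\<not> E \<gamma> a" "\<not> E \<epsilon> b"
    using \<gamma> \<epsilon> ring_octagon[OF ring] unfolding octagon_def within_two_def by (metis adj_sym)+
  show False
  proof (cases "\<gamma> = \<epsilon>")
    case True
    then show False
      using no_induced_P6[of a x y c \<gamma> d] \<gamma> \<epsilon> \<gamma>_non far inner oct_facts adj_sym by metis
  next
    case False
    then have "\<not> E \<gamma> d" "\<not> E \<epsilon> c" "\<not> E \<gamma> \<epsilon>"
      using D_private_neighbour D_independent \<gamma> \<epsilon> adj_sym by metis+
    then show False
    proof (cases "E y w")
      case True
      with \<open>\<not> E \<gamma> d\<close> \<open>\<not> E \<epsilon> c\<close> \<open>\<not> E \<gamma> \<epsilon>\<close> show False
        using no_induced_P6[of \<gamma> c y w d \<epsilon>] \<gamma> \<epsilon> \<gamma>_non \<epsilon>_non oct_facts adj_sym by metis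
    next
      case False
      with \<open>\<not> E \<gamma> d\<close> show False
        using no_induced_P6[of \<gamma> c y x w d] \<gamma> \<gamma>_non inner oct_facts adj_sym by metis
    qed
  qed
qed

lemma ring_outer_not_in_D:
  assumes ring: "ring E a x b y c z d w"
  shows "a \<notin> D"
proof
  assume a: "a \<in> D"
  note oct_facts = octagon_edges[OF ring_octagon[OF ring]] octagon_non_edges[OF ring_octagon[OF ring]]
  have xw: "E x w" using ring_inner_edges[OF ring] adj_sym by blast
  have b: "b \<notin> D" using D_private_neighbour[OF _ a, of b x] oct_facts adj_sym by metis
  obtain \<beta> where \<beta>: "\<beta> \<in> D" "E b \<beta>" using oct_facts(3) b by (rule D_dominator)
  have d: "d \<notin> D" using D_private_neighbour[OF _ a, of d w] oct_facts adj_sym by metis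
  obtain \<epsilon> where \<epsilon>: "\<epsilon> \<in> D" "E d \<epsilon>" using oct_facts(7) d by (rule D_dominator)
  have non: "\<not> E \<beta> x" "\<not> E \<beta> w" "\<not> E \<epsilon> x" "\<not> E \<epsilon> w"
    using D_private_neighbour[OF \<beta>(1) a] D_private_neighbour[OF \<epsilon>(1) a] \<beta> \<epsilon> oct_facts adj_sym
    by metis+
  have far: "\<not> E \<beta> d" "\<not> E \<epsilon> b" "\<beta> \<noteq> \<epsilon>"
    using \<beta> \<epsilon> ring_octagon[OF ring] unfolding octagon_def within_two_def by (metis adj_sym)+
  then have "\<not> E \<beta> \<epsilon>" using D_independent \<beta> \<epsilon> by blast
  then show False
    using no_induced_P6[of \<beta> b x w d \<epsilon>] \<beta> \<epsilon> non far xw oct_facts adj_sym by metis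
qed

lemma ring_not_in_D:
  assumes ring: "ring E a x b y c z d w"
  shows "D \<inter> {a, x, b, y, c, z, d, w} = {}"
proof -
  note rot = ring_rotate[OF ring] ring_rotate[OF ring_rotate[OF ring]]
    ring_rotate[OF ring_rotate[OF ring_rotate[OF ring]]]
  show ?thesis
    using ring_inner_not_in_D[OF ring] ring_outer_not_in_D[OF ring]
      ring_inner_not_in_D[OF rot(1)] ring_outer_not_in_D[OF rot(1)]
      ring_inner_not_in_D[OF rot(2)] ring_outer_not_in_D[OF rot(2)]
      ring_inner_not_in_D[OF rot(3)] ring_outer_not_in_D[OF rot(3)]
    by blast
qed

lemma no_ring_with_distinct_dominators:
  assumes ring: "ring E a x b y c z d w"
    and \<alpha>: "\<alpha> \<in> D" "E a \<alpha>" and \<beta>: "\<beta> \<in> D" "E b \<beta>"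
    and \<gamma>: "\<gamma> \<in> D" "E c \<gamma>" and \<epsilon>: "\<epsilon> \<in> D" "E d \<epsilon>"
    and distinct: "\<alpha> \<noteq> \<beta>" "\<beta> \<noteq> \<gamma>" "\<gamma> \<noteq> \<epsilon>" "\<epsilon> \<noteq> \<alpha>"
  shows False
proof -
  note oct = ring_octagon[OF ring]
  note oct_facts = octagon_edges[OF oct] octagon_non_edges[OF oct]
  have inner: "E x y" "E y z" "E z w" "E w x" using ring_inner_edges[OF ring] by blast+
  have far: "\<not> E \<alpha> c" "\<not> E \<gamma> a" "\<not> E \<beta> d" "\<not> E \<epsilon> b" "\<alpha> \<noteq> \<gamma>" "\<beta> \<noteq> \<epsilon>"
    using \<alpha> \<beta> \<gamma> \<epsilon> oct unfolding octagon_def within_two_def by (metis adj_sym)+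
  have others: "\<not> E \<alpha> b" "\<not> E \<alpha> d" "\<not> E \<beta> a" "\<not> E \<beta> c"
    "\<not> E \<gamma> b" "\<not> E \<gamma> d" "\<not> E \<epsilon> a" "\<not> E \<epsilon> c"
    using D_private_neighbour \<alpha> \<beta> \<gamma> \<epsilon> distinct adj_sym by metis+
  have indep: "\<not> E \<alpha> \<gamma>" "\<not> E \<beta> \<epsilon>" using D_independent \<alpha> \<beta> \<gamma> \<epsilon> by blast+
  note facts = \<alpha> \<beta> \<gamma> \<epsilon> far others indep inner oct_facts adj_sym
  \<comment> \<open>An induced path \<alpha> a u v c \<gamma> through an edge u v of the ring forces \<alpha> or \<gamma>
    to see u or v; likewise for \<beta> b u v d \<epsilon>.\<close>
  have across:
    "E \<alpha> x \<or> E \<alpha> y \<or> E \<gamma> x \<or> E \<gamma> y"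
    "E \<alpha> w \<or> E \<alpha> z \<or> E \<gamma> w \<or> E \<gamma> z"
    "E \<beta> x \<or> E \<beta> w \<or> E \<epsilon> x \<or> E \<epsilon> w"
    "E \<beta> y \<or> E \<beta> z \<or> E \<epsilon> y \<or> E \<epsilon> z"
    using no_induced_P6[of \<alpha> a x y c \<gamma>] no_induced_P6[of \<alpha> a w z c \<gamma>]
      no_induced_P6[of \<beta> b x w d \<epsilon>] no_induced_P6[of \<beta> b y z d \<epsilon>] facts
    by metis+
  have one_dominator: "\<And>v.
      \<not> (E \<alpha> v \<and> E \<beta> v) \<and> \<not> (E \<alpha> v \<and> E \<gamma> v) \<and> \<not> (E \<alpha> v \<and> E \<epsilon> v) \<and>
      \<not> (E \<beta> v \<and> E \<gamma> v) \<and> \<not> (E \<beta> v \<and> E \<epsilon> v) \<and> \<not> (E \<gamma> v \<and> E \<epsilon> v)"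
    using D_private_neighbour \<alpha>(1) \<beta>(1) \<gamma>(1) \<epsilon>(1) distinct far by metis
  consider (xz) "E x z" | (yw) "E y w" | (no_diagonal) "\<not> E x z" "\<not> E y w" by blast
  then show False
  proof cases
    case xz
    have "E \<alpha> x \<or> E \<alpha> z \<or> E \<gamma> x \<or> E \<gamma> z" "E \<beta> x \<or> E \<beta> z \<or> E \<epsilon> x \<or> E \<epsilon> z"
      using no_induced_P6[of \<alpha> a x z c \<gamma>] no_induced_P6[of \<beta> b x z d \<epsilon>] xz facts by metis+
    then show False
      using across one_dominator[of x] one_dominator[of y] one_dominator[of z] one_dominator[of w]
      by sat
  next
    case yw
    have "E \<alpha> w \<or> E \<alpha> y \<or> E \<gamma> w \<or> E \<gamma> y" "E \<beta> y \<or> E \<beta> w \<or> E \<epsilon> y \<or> E \<epsilon> w"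
      using no_induced_P6[of \<alpha> a w y c \<gamma>] no_induced_P6[of \<beta> b y w d \<epsilon>] yw facts by metis+
    then show False
      using across one_dominator[of x] one_dominator[of y] one_dominator[of z] one_dominator[of w]
      by sat
  next
    case no_diagonal
    \<comment> \<open>Now x y z w is an induced 4-cycle: every dominator meets it (by the paths around
      the ring) and meets it twice (a single neighbour would complete a banner), which four
      vertices with private dominators cannot accommodate.\<close>
    have around:
      "E \<alpha> y \<or> E \<alpha> z \<or> E \<alpha> w" "E \<beta> w \<or> E \<beta> z \<or> E \<beta> y"
      "E \<gamma> x \<or> E \<gamma> w \<or> E \<gamma> z" "E \<epsilon> y \<or> E \<epsilon> x \<or> E \<epsilon> w"
      using no_induced_P6[of b y z w a \<alpha>] no_induced_P6[of a w z y b \<beta>]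
        no_induced_P6[of b x w z c \<gamma>] no_induced_P6[of c y x w d \<epsilon>] no_diagonal facts
      by metis+
    have meets_twice: "\<And>p. (E p x \<longrightarrow> E p y \<or> E p z \<or> E p w) \<and> (E p y \<longrightarrow> E p x \<or> E p z \<or> E p w)
        \<and> (E p z \<longrightarrow> E p x \<or> E p y \<or> E p w) \<and> (E p w \<longrightarrow> E p x \<or> E p y \<or> E p z)"
      using no_banner[of x y z w] no_banner[of y z w x] no_banner[of z w x y] no_banner[of w x y z]
        no_diagonal inner oct_facts adj_sym by metis
    show False
      using around meets_twice[of \<alpha>] meets_twice[of \<beta>] meets_twice[of \<gamma>] meets_twice[of \<epsilon>]
        one_dominator[of x] one_dominator[of y] one_dominator[of z] one_dominator[of w] by sat
  qed
qed

lemma no_ring_with_dominating_midpoints: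
  assumes ring: "ring E a x b y c z d w"
    and x: "\<And>p. p \<in> D \<Longrightarrow> E a p \<Longrightarrow> E p b \<Longrightarrow> x \<in> D"
    and y: "\<And>p. p \<in> D \<Longrightarrow> E b p \<Longrightarrow> E p c \<Longrightarrow> y \<in> D"
    and z: "\<And>p. p \<in> D \<Longrightarrow> E c p \<Longrightarrow> E p d \<Longrightarrow> z \<in> D"
    and w: "\<And>p. p \<in> D \<Longrightarrow> E d p \<Longrightarrow> E p a \<Longrightarrow> w \<in> D"
  shows False
proof -
  note oct_facts = octagon_edges[OF ring_octagon[OF ring]]
  have none: "a \<notin> D" "b \<notin> D" "c \<notin> D" "d \<notin> D" "x \<notin> D" "y \<notin> D" "z \<notin> D" "w \<notin> D"
    using ring_not_in_D[OF ring] by blast+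
  obtain \<alpha> where \<alpha>: "\<alpha> \<in> D" "E a \<alpha>" using oct_facts(1) none(1) by (rule D_dominator)
  obtain \<beta> where \<beta>: "\<beta> \<in> D" "E b \<beta>" using oct_facts(3) none(2) by (rule D_dominator)
  obtain \<gamma> where \<gamma>: "\<gamma> \<in> D" "E c \<gamma>" using oct_facts(5) none(3) by (rule D_dominator)
  obtain \<epsilon> where \<epsilon>: "\<epsilon> \<in> D" "E d \<epsilon>" using oct_facts(7) none(4) by (rule D_dominator)
  have "\<alpha> \<noteq> \<beta>" "\<beta> \<noteq> \<gamma>" "\<gamma> \<noteq> \<epsilon>" "\<epsilon> \<noteq> \<alpha>"
    using x y z w none \<alpha> \<beta> \<gamma> \<epsilon> adj_sym by metis+
  then show False
    using no_ring_with_distinct_dominators[OF ring \<alpha> \<beta> \<gamma> \<epsilon>] by blast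
qed

text \<open>Preferring midpoints in D makes the dominators of consecutive corners distinct
  once D avoids the octagon.\<close>
lemma midpoint_preferring_D:
  assumes "within_two E u v" "\<not> E u v"
  obtains m where "E u m" "E m v" "\<And>p. p \<in> D \<Longrightarrow> E u p \<Longrightarrow> E p v \<Longrightarrow> m \<in> D"
proof (cases "\<exists>p\<in>D. E u p \<and> E p v")
  case True
  then show ?thesis using that by blast
next
  case False
  then show ?thesis using that assms within_two_midpoint by metis
qed

lemma no_far_quadrangle_without_edge_sides:
  assumes sides: "\<not> E a b" "\<not> E b c" "\<not> E c d" "\<not> E d a"
    and close: "within_two E a b" "within_two E b c" "within_two E c d" "within_two E d a"
    and ac: "\<not> within_two E a c" and bd: "\<not> within_two E b d"
    and ae: "within_two E a e"
    and eb: "\<not> within_two E e b" and ec: "\<not> within_two E e c" and ed: "\<not> within_two E e d"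
  shows False
proof -
  obtain x where x: "E a x" "E x b" "\<And>p. p \<in> D \<Longrightarrow> E a p \<Longrightarrow> E p b \<Longrightarrow> x \<in> D"
    using close(1) sides(1) by (rule midpoint_preferring_D) blast
  obtain y where y: "E b y" "E y c" "\<And>p. p \<in> D \<Longrightarrow> E b p \<Longrightarrow> E p c \<Longrightarrow> y \<in> D"
    using close(2) sides(2) by (rule midpoint_preferring_D) blast
  obtain z where z: "E c z" "E z d" "\<And>p. p \<in> D \<Longrightarrow> E c p \<Longrightarrow> E p d \<Longrightarrow> z \<in> D"
    using close(3) sides(3) by (rule midpoint_preferring_D) blast
  obtain w where w: "E d w" "E w a" "\<And>p. p \<in> D \<Longrightarrow> E d p \<Longrightarrow> E p a \<Longrightarrow> w \<in> D"
    using close(4) sides(4) by (rule midpoint_preferring_D) blast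
  have oct: "octagon E a x b y c z d w"
    unfolding octagon_def using x y z w sides ac bd by blast
  show False
    using octagon_cases[OF oct]
  proof
    assume "ring E a x b y c z d w"
    then show False using x(3) y(3) z(3) w(3) by (rule no_ring_with_dominating_midpoints)
  next
    assume "E x z \<and> E y w \<and> \<not> E x y \<and> \<not> E y z \<and> \<not> E z w \<and> \<not> E w x"
    then show False
      using no_crossed_octagon_with_far_pendant[OF oct _ _ _ ae eb ec ed] by blast
  qed
qed

lemma no_square_banner:
  assumes close: "within_two E a b" "within_two E b c" "within_two E c d" "within_two E d a"
    and ae: "within_two E a e"
    and ac: "\<not> within_two E a c" and bd: "\<not> within_two E b d"
    and eb: "\<not> within_two E e b" and ec: "\<not> within_two E e c" and ed: "\<not> within_two E e d"
  shows False
proof -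
  have no_path: "\<not> (E a b \<and> E b c)" "\<not> (E b c \<and> E c d)" "\<not> (E c d \<and> E d a)" "\<not> (E d a \<and> E a b)"
    using ac bd within_two_sym adj_sym unfolding within_two_def by blast+
  have ca: "\<not> within_two E c a" and db: "\<not> within_two E d b"
    using ac bd within_two_sym by blast+
  consider (ab) "E a b" "\<not> E c d" | (bc) "E b c" "\<not> E d a" | (cd) "E c d" "\<not> E a b"
    | (da) "E d a" "\<not> E b c" | (ab_cd) "E a b" "E c d" | (bc_da) "E b c" "E d a"
    | (no_edge) "\<not> E a b" "\<not> E b c" "\<not> E c d" "\<not> E d a"
    by blast
  then show False
  proof cases
    case ab
    then show False
      using no_far_quadrangle_single_edge_side[OF _ _ _ _ close(2,4) ac bd] no_path by blast
  next
    case bc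
    then show False
      using no_far_quadrangle_single_edge_side[OF _ _ _ _ close(3,1) bd ca] no_path by blast
  next
    case cd
    then show False
      using no_far_quadrangle_single_edge_side[OF _ _ _ _ close(4,2) ca db] no_path by blast
  next
    case da
    then show False
      using no_far_quadrangle_single_edge_side[OF _ _ _ _ close(1,3) db ac] no_path by blast
  next
    case ab_cd
    then show False
      using no_far_quadrangle_opposite_edge_sides[OF _ _ _ _ close(2) ae ac bd eb ec ed] no_path
      by blast
  next
    case bc_da
    then show False
      using no_far_quadrangle_opposite_edge_sides[of a d c b e] close(3) ae ac db ed ec eb no_path
        adj_sym within_two_sym by blast
  next
    case no_edge
    then show False
      using no_far_quadrangle_without_edge_sides[OF _ _ _ _ close ac bd ae eb ec ed] by blast
  qed
qed

end

theorem theorem2: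
  fixes V :: "'a set" and E :: "'a \<Rightarrow> 'a \<Rightarrow> bool"
  assumes "simple_graph V E"
    and "P_free 6 V E"
    and "banner_free V E"
    and "\<exists>D. efficient_dominating_set V E D"
  shows "banner_free V (square_edges V E)"
proof (rule ccontr)
  obtain D where "efficient_dominating_set V E D" using assms(4) by blast
  with assms(1-3) interpret p6_banner_free_graph_with_ed V E D
    by unfold_locales
  assume "\<not> banner_free V (square_edges V E)"
  then obtain f where inj: "inj_on f {0..<5}" and fV: "f ` {0..<5} \<subseteq> V"
    and fE: "\<forall>i\<in>{0..<5}. \<forall>j\<in>{0..<5}. square_edges V E (f i) (f j) \<longleftrightarrow> banner_edges i j"
    unfolding banner_free_def has_induced_def by blast
  have "within_two E (f i) (f j) \<longleftrightarrow> banner_edges i j" if "i < 5" "j < 5" "i \<noteq> j" for i j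
  proof -
    have ij: "i \<in> {0..<5}" "j \<in> {0..<5}" using that by auto
    then have "f i \<in> V" "f j \<in> V" "f i \<noteq> f j"
      using fV inj \<open>i \<noteq> j\<close> unfolding inj_on_def by auto
    then show ?thesis using fE[rule_format, OF ij] square_edges_iff[OF simple] by simp
  qed
  then show False
    using no_square_banner[of "f 0" "f 1" "f 2" "f 3" "f 4"]
    by (simp add: banner_edges_def doubleton_eq_iff)
qed

end
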